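(* Let $K$ be a positive integer, let $J$ be a positive integer or $\infty$, write $[J]=\{1,\dots,J\}$ (with $[J]=\mathbb{Z}_+$ if $J=\infty$), and let $Q=[Q_1,\dots,Q_K]$ with $Q_l:[J]\to\{0,1\}$. Let $k\in\{1,\dots,K\}$ and suppose $$\{k\}=\bigcap_{\substack{S\subset\{1,\dots,K\}\\ k\in S,\ \mathcal{R}(S)\neq\emptyset}} S.$$ Then $k$ does not mask any $k'\neq k$.
   Context: $\operatorname{supp}(Q_l)=\{j: Q_l(j)=1\}$. For $S\subset\{1,\dots,K\}$, $\mathcal{R}(S)\subset[J]$ is the set of indices $j$ such that $Q_l(j)=1$ for all $l\in S$ and $Q_l(j)=0$ for all $l\notin S$. We say $k$ masks $k'$ if $\operatorname{supp}(Q_{k})\subset\operatorname{supp}(Q_{k'})$. An intersection over an empty family of sets is taken to be empty. *)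

theory Defs
  imports Main "HOL-Library.Extended_Nat"
begin

definition idx :: "enat \<Rightarrow> nat set" where
  "idx J = {j. 1 \<le> j \<and> enat j \<le> J}"

text \<open>Q l j is the value Q_l(j) in {0,1}.\<close>
definition supp :: "enat \<Rightarrow> (nat \<Rightarrow> nat \<Rightarrow> nat) \<Rightarrow> nat \<Rightarrow> nat set" where
  "supp J Q l = {j \<in> idx J. Q l j = 1}"

definition RR :: "nat \<Rightarrow> enat \<Rightarrow> (nat \<Rightarrow> nat \<Rightarrow> nat) \<Rightarrow> nat set \<Rightarrow> nat set" where
  "RR K J Q S = {j \<in> idx J. (\<forall>l\<in>S. Q l j = 1) \<and> (\<forall>l\<in>{1..K} - S. Q l j = 0)}"

definition Inter0 :: "'a set set \<Rightarrow> 'a set" where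
  "Inter0 F = (if F = {} then {} else \<Inter> F)"

definition masks :: "enat \<Rightarrow> (nat \<Rightarrow> nat \<Rightarrow> nat) \<Rightarrow> nat \<Rightarrow> nat \<Rightarrow> bool" where
  "masks J Q k k' \<longleftrightarrow> supp J Q k \<subseteq> supp J Q k'"

end

theory Submission
  imports Defs
begin

lemma mem_Inter0_iff: "x \<in> Inter0 F \<longleftrightarrow> F \<noteq> {} \<and> (\<forall>S\<in>F. x \<in> S)"
  unfolding Inter0_def by auto

lemma masks_imp_mem_pattern:
  assumes "masks J Q k k'" and "k \<in> S" and "k' \<in> {1..K}" and "RR K J Q S \<noteq> {}"
  shows "k' \<in> S"
proof (rule ccontr)
  assume "k' \<notin> S"
  obtain j where j: "j \<in> RR K J Q S" using assms(4) by blast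
  then have "j \<in> supp J Q k" using \<open>k \<in> S\<close> unfolding RR_def supp_def by auto
  then have "Q k' j = 1" using assms(1) unfolding masks_def supp_def by auto
  moreover have "Q k' j = 0" using j \<open>k' \<notin> S\<close> assms(3) unfolding RR_def by auto
  ultimately show False by simp
qed

theorem lemma4:
  fixes K :: nat and J :: enat and Q :: "nat \<Rightarrow> nat \<Rightarrow> nat" and k :: nat
  assumes "K \<ge> 1" and "J \<ge> 1"
    and "\<forall>l\<in>{1..K}. \<forall>j\<in>idx J. Q l j \<in> {0, 1}"
    and "k \<in> {1..K}"
    and "{k} = Inter0 {S. S \<subseteq> {1..K} \<and> k \<in> S \<and> RR K J Q S \<noteq> {}}"
  shows "\<forall>k'\<in>{1..K}. k' \<noteq> k \<longrightarrow> \<not> masks J Q k k'"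
proof (intro ballI impI notI)
  fix k' assume "k' \<in> {1..K}" "k' \<noteq> k" and "masks J Q k k'"
  let ?F = "{S. S \<subseteq> {1..K} \<and> k \<in> S \<and> RR K J Q S \<noteq> {}}"
  have "?F \<noteq> {}" using assms(5) mem_Inter0_iff by (metis singletonI)
  moreover have "\<forall>S\<in>?F. k' \<in> S"
    using masks_imp_mem_pattern[OF \<open>masks J Q k k'\<close> _ \<open>k' \<in> {1..K}\<close>] by blast
  ultimately have "k' \<in> Inter0 ?F" by (simp add: mem_Inter0_iff)
  with assms(5) \<open>k' \<noteq> k\<close> show False by blast
qed

end
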